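(* Let $\mathbb V$ be a $k$-module over $\mathbb W$ admitting a multiplicative basis $\mathfrak B=\{v_i\}_{i\in I}$ with respect to the basis $\mathfrak B'=\{w_j\}_{j\in J}$ of $\mathbb W$. If $\mathbb V$ is simple, then any two elements of $I$ are connected (i.e. $I/\sim$ has exactly one class).
   Context: Fix integers $n\ge 2$ and $1\le k\le n$ and an arbitrary field $\mathbb F$; $S_n$ denotes the symmetric group on $n$ letters. A $k$-module over a linear space $\mathbb W$ is an $\mathbb F$-vector space $\mathbb V$ (the dimensions of $\mathbb V$ and $\mathbb W$ are arbitrary, possibly infinite) together with, for every $\sigma\in S_n$, an $n$-linear map $\mathbb V^k\times\mathbb W^{n-k}\to\mathbb V$, $(x_1,\dots,x_k,y_{k+1},\dots,y_n)\mapsto[x_1,\dots,x_k,y_{k+1},\dots,y_n]_\sigma$ (interpreted as an $n$-ary bracket in which the $l$-th argument is placed in position $\sigma(l)$). A $k$-submodule of $\mathbb V$ is a linear subspace $U$ such that $[u,x_2,\dots,x_k,y_{k+1},\dots,y_n]_\sigma\in U$ for all $\sigma\in S_n$, $u\in U$, $x_l\in\mathbb V$, $y_l\in\mathbb W$. $\mathbb V$ is simple if its only $k$-submodules are $\{0\}$ and $\mathbb V$. A basis $\mathfrak B=\{v_i\}_{i\in I}$ of $\mathbb V$ is multiplicative (with respect to a basis $\mathfrak B'=\{w_j\}_{j\in J}$ of $\mathbb W$) if for all $\sigma\in S_n$, $i_1,\dots,i_k\in I$, $j_{k+1},\dots,j_n\in J$, the element $[v_{i_1},\dots,v_{i_k},w_{j_{k+1}},\dots,w_{j_n}]_\sigma$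 lies in $\mathbb F v_r$ for some $r\in I$. Index machinery: let $\overline I=\{\overline i:i\in I\}$ and $\overline J=\{\overline j:j\in J\}$ be sets of new symbols disjoint from $I$ and $J$, with the convention $\overline{\overline x}=x$. For $\sigma\in S_n$, $i_1,\dots,i_k\in I$, $j_{k+1},\dots,j_n\in J$, let $a_\sigma(i_1,\dots,i_k,j_{k+1},\dots,j_n)=\emptyset$ if $[v_{i_1},\dots,v_{i_k},w_{j_{k+1}},\dots,w_{j_n}]_\sigma=0$ and $=\{r\}$ if this bracket is a nonzero element of $\mathbb F v_r$. For $i,i_2,\dots,i_k\in I$, $j_{k+1},\dots,j_n\in J$ let $b_\sigma(i,\overline i_2,\dots,\overline i_k,\overline j_{k+1},\dots,\overline j_n)=\{i'\in I: a_\sigma(i',i_2,\dots,i_k,j_{k+1},\dots,j_n)=\{i\}\}$. For $i\in I$, $X=(x_2,\dots,x_k)\in(I\,\dot\cup\,\overline I)^{k-1}$, $Y=(y_{k+1},\dots,y_n)\in(J\,\dot\cup\,\overline J)^{n-k}$ define $\mu(i,X,Y)\subseteq I$ by: $\mu(i,X,Y)=\bigcup_{\sigma\in S_n}a_\sigma(i,X,Y)$ if all $x_l\in I$ and all $y_l\in J$; $\mu(i,X,Y)=\bigcup_{\sigma\in S_n}b_\sigma(i,X,Y)$ if all $x_l\in\overline I$ and all $y_l\in\overline J$; and $\mu(i,X,Y)=\emptyset$ otherwise. For $\mathfrak A\subseteq I$ set $\phi(\mathfrak A,X,Y)=\bigcup_{i\in\mathfrak A}\mu(i,X,Y)$. Connections: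 for distinct $i,i'\in I$, a connection from $i$ to $i'$ is a finite sequence $(X_1,Y_1,\dots,X_t,Y_t)$, $t\ge1$, with $X_m\in(I\,\dot\cup\,\overline I)^{k-1}$ and $Y_m\in(J\,\dot\cup\,\overline J)^{n-k}$, such that, setting $\mathfrak A_0=\{i\}$ and $\mathfrak A_m=\phi(\mathfrak A_{m-1},X_m,Y_m)$, one has $\mathfrak A_m\neq\emptyset$ for $1\le m\le t-1$ and $i'\in\mathfrak A_t$. We say $i$ is connected to $i'$ if such a connection exists; by convention every $i\in I$ is connected to itself. This relation, written $i\sim i'$, is an equivalence relation on $I$. *)

theory Defs
  imports Complex_Main "HOL-Combinatorics.Permutations"
begin

definition Sym :: "nat \<Rightarrow> (nat \<Rightarrow> nat) set" where
  "Sym n = {\<sigma>. \<sigma> permutes {1..n}}"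

text \<open>A k-module V (the whole type 'v, a vector space over the field 'a with scalar
  multiplication sV) over the linear space W (type 'w, scalar multiplication sW).
  The bracket br sigma xs ys takes the list xs = [x_1,...,x_k] of V-arguments and
  the list ys = [y_(k+1),...,y_n] of W-arguments; it is required to be linear in
  each of its n arguments (for arguments of the right lengths).\<close>
definition is_kmodule ::
  "nat \<Rightarrow> nat \<Rightarrow> ('a::field \<Rightarrow> 'v::ab_group_add \<Rightarrow> 'v) \<Rightarrow> ('a \<Rightarrow> 'w::ab_group_add \<Rightarrow> 'w)
    \<Rightarrow> ((nat \<Rightarrow> nat) \<Rightarrow> 'v list \<Rightarrow> 'w list \<Rightarrow> 'v) \<Rightarrow> bool" where
  "is_kmodule n k sV sW br \<longleftrightarrow>
     vector_space sV \<and> vector_space sW \<and>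
     (\<forall>\<sigma>\<in>Sym n. \<forall>xs ys. length xs = k \<longrightarrow> length ys = n - k \<longrightarrow>
        (\<forall>l<k. Vector_Spaces.linear sV sV (\<lambda>u. br \<sigma> (xs[l := u]) ys)) \<and>
        (\<forall>l<n - k. Vector_Spaces.linear sW sV (\<lambda>u. br \<sigma> xs (ys[l := u]))))"

definition is_ksubmodule ::
  "nat \<Rightarrow> nat \<Rightarrow> ('a::field \<Rightarrow> 'v::ab_group_add \<Rightarrow> 'v)
    \<Rightarrow> ((nat \<Rightarrow> nat) \<Rightarrow> 'v list \<Rightarrow> 'w list \<Rightarrow> 'v) \<Rightarrow> 'v set \<Rightarrow> bool" where
  "is_ksubmodule n k sV br U \<longleftrightarrow>
     module.subspace sV U \<and>
     (\<forall>\<sigma>\<in>Sym n. \<forall>u\<in>U. \<forall>xs ys. length xs = k - 1 \<longrightarrow> length ys = n - k \<longrightarrow>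
        br \<sigma> (u # xs) ys \<in> U)"

definition is_simple_kmodule ::
  "nat \<Rightarrow> nat \<Rightarrow> ('a::field \<Rightarrow> 'v::ab_group_add \<Rightarrow> 'v)
    \<Rightarrow> ((nat \<Rightarrow> nat) \<Rightarrow> 'v list \<Rightarrow> 'w list \<Rightarrow> 'v) \<Rightarrow> bool" where
  "is_simple_kmodule n k sV br \<longleftrightarrow>
     (\<forall>U. is_ksubmodule n k sV br U \<longrightarrow> U = {0} \<or> U = UNIV)"

definition is_basis :: "('a::field \<Rightarrow> 'v::ab_group_add \<Rightarrow> 'v) \<Rightarrow> 'i set \<Rightarrow> ('i \<Rightarrow> 'v) \<Rightarrow> bool" where
  "is_basis sV I v \<longleftrightarrow>
     inj_on v I \<and> \<not> module.dependent sV (v ` I) \<and> module.span sV (v ` I) = UNIV"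

definition is_multiplicative_basis ::
  "nat \<Rightarrow> nat \<Rightarrow> ('a::field \<Rightarrow> 'v::ab_group_add \<Rightarrow> 'v)
    \<Rightarrow> ((nat \<Rightarrow> nat) \<Rightarrow> 'v list \<Rightarrow> 'w list \<Rightarrow> 'v)
    \<Rightarrow> 'i set \<Rightarrow> ('i \<Rightarrow> 'v) \<Rightarrow> 'j set \<Rightarrow> ('j \<Rightarrow> 'w) \<Rightarrow> bool" where
  "is_multiplicative_basis n k sV br I v J w \<longleftrightarrow>
     (\<forall>\<sigma>\<in>Sym n. \<forall>is js. set is \<subseteq> I \<longrightarrow> length is = k \<longrightarrow> set js \<subseteq> J \<longrightarrow> length js = n - k \<longrightarrow>
        (\<exists>r\<in>I. \<exists>c. br \<sigma> (map v is) (map w js) = sV c (v r)))"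

text \<open>a_sigma(i_1,...,i_k,j_(k+1),...,j_n): empty if the bracket is zero, and {r} if
  it is a nonzero element of F v_r.\<close>
definition a_idx ::
  "('a::field \<Rightarrow> 'v::ab_group_add \<Rightarrow> 'v) \<Rightarrow> ((nat \<Rightarrow> nat) \<Rightarrow> 'v list \<Rightarrow> 'w list \<Rightarrow> 'v)
    \<Rightarrow> 'i set \<Rightarrow> ('i \<Rightarrow> 'v) \<Rightarrow> ('j \<Rightarrow> 'w) \<Rightarrow> (nat \<Rightarrow> nat) \<Rightarrow> 'i list \<Rightarrow> 'j list \<Rightarrow> 'i set" where
  "a_idx sV br I v w \<sigma> is js =
     {r \<in> I. br \<sigma> (map v is) (map w js) \<noteq> 0 \<and> (\<exists>c. br \<sigma> (map v is) (map w js) = sV c (v r))}"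

definition b_idx ::
  "('a::field \<Rightarrow> 'v::ab_group_add \<Rightarrow> 'v) \<Rightarrow> ((nat \<Rightarrow> nat) \<Rightarrow> 'v list \<Rightarrow> 'w list \<Rightarrow> 'v)
    \<Rightarrow> 'i set \<Rightarrow> ('i \<Rightarrow> 'v) \<Rightarrow> ('j \<Rightarrow> 'w) \<Rightarrow> (nat \<Rightarrow> nat) \<Rightarrow> 'i \<Rightarrow> 'i list \<Rightarrow> 'j list \<Rightarrow> 'i set" where
  "b_idx sV br I v w \<sigma> i is js = {i' \<in> I. a_idx sV br I v w \<sigma> (i' # is) js = {i}}"

text \<open>Symbols of I (disjoint-union) bar I are encoded as 'i + 'i: Inl i is i, Inr i is bar i.
  Similarly for J.\<close>
definition mu ::
  "nat \<Rightarrow> ('a::field \<Rightarrow> 'v::ab_group_add \<Rightarrow> 'v) \<Rightarrow> ((nat \<Rightarrow> nat) \<Rightarrow> 'v list \<Rightarrow> 'w list \<Rightarrow> 'v)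
    \<Rightarrow> 'i set \<Rightarrow> ('i \<Rightarrow> 'v) \<Rightarrow> ('j \<Rightarrow> 'w) \<Rightarrow> 'i \<Rightarrow> ('i + 'i) list \<Rightarrow> ('j + 'j) list \<Rightarrow> 'i set" where
  "mu n sV br I v w i X Y =
     (if (\<forall>x\<in>set X. isl x) \<and> (\<forall>y\<in>set Y. isl y) then
        (\<Union>\<sigma>\<in>Sym n. a_idx sV br I v w \<sigma> (i # map projl X) (map projl Y))
      else if (\<forall>x\<in>set X. \<not> isl x) \<and> (\<forall>y\<in>set Y. \<not> isl y) then
        (\<Union>\<sigma>\<in>Sym n. b_idx sV br I v w \<sigma> i (map projr X) (map projr Y))
      else {})"

definition phi ::
  "nat \<Rightarrow> ('a::field \<Rightarrow> 'v::ab_group_add \<Rightarrow> 'v) \<Rightarrow> ((nat \<Rightarrow> nat) \<Rightarrow> 'v list \<Rightarrow> 'w list \<Rightarrow> 'v)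
    \<Rightarrow> 'i set \<Rightarrow> ('i \<Rightarrow> 'v) \<Rightarrow> ('j \<Rightarrow> 'w) \<Rightarrow> 'i set \<Rightarrow> ('i + 'i) list \<Rightarrow> ('j + 'j) list \<Rightarrow> 'i set" where
  "phi n sV br I v w A X Y = (\<Union>i\<in>A. mu n sV br I v w i X Y)"

fun phi_iter ::
  "nat \<Rightarrow> ('a::field \<Rightarrow> 'v::ab_group_add \<Rightarrow> 'v) \<Rightarrow> ((nat \<Rightarrow> nat) \<Rightarrow> 'v list \<Rightarrow> 'w list \<Rightarrow> 'v)
    \<Rightarrow> 'i set \<Rightarrow> ('i \<Rightarrow> 'v) \<Rightarrow> ('j \<Rightarrow> 'w) \<Rightarrow> 'i set \<Rightarrow> (('i + 'i) list \<times> ('j + 'j) list) list \<Rightarrow> 'i set" where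
  "phi_iter n sV br I v w A [] = A"
| "phi_iter n sV br I v w A ((X, Y) # ps) = phi_iter n sV br I v w (phi n sV br I v w A X Y) ps"

definition valid_step ::
  "nat \<Rightarrow> nat \<Rightarrow> 'i set \<Rightarrow> 'j set \<Rightarrow> ('i + 'i) list \<times> ('j + 'j) list \<Rightarrow> bool" where
  "valid_step n k I J p \<longleftrightarrow>
     length (fst p) = k - 1 \<and> length (snd p) = n - k \<and>
     (\<forall>x\<in>set (fst p). case_sum (\<lambda>i. i \<in> I) (\<lambda>i. i \<in> I) x) \<and>
     (\<forall>y\<in>set (snd p). case_sum (\<lambda>j. j \<in> J) (\<lambda>j. j \<in> J) y)"

definition is_connection ::
  "nat \<Rightarrow> nat \<Rightarrow> ('a::field \<Rightarrow> 'v::ab_group_add \<Rightarrow> 'v) \<Rightarrow> ((nat \<Rightarrow> nat) \<Rightarrow> 'v list \<Rightarrow> 'w list \<Rightarrow> 'v)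
    \<Rightarrow> 'i set \<Rightarrow> ('i \<Rightarrow> 'v) \<Rightarrow> 'j set \<Rightarrow> ('j \<Rightarrow> 'w) \<Rightarrow> 'i \<Rightarrow> 'i
    \<Rightarrow> (('i + 'i) list \<times> ('j + 'j) list) list \<Rightarrow> bool" where
  "is_connection n k sV br I v J w i i' ps \<longleftrightarrow>
     ps \<noteq> [] \<and> (\<forall>p\<in>set ps. valid_step n k I J p) \<and>
     (\<forall>m. 1 \<le> m \<and> m < length ps \<longrightarrow> phi_iter n sV br I v w {i} (take m ps) \<noteq> {}) \<and>
     i' \<in> phi_iter n sV br I v w {i} ps"

definition idx_connected ::
  "nat \<Rightarrow> nat \<Rightarrow> ('a::field \<Rightarrow> 'v::ab_group_add \<Rightarrow> 'v) \<Rightarrow> ((nat \<Rightarrow> nat) \<Rightarrow> 'v list \<Rightarrow> 'w list \<Rightarrow> 'v)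
    \<Rightarrow> 'i set \<Rightarrow> ('i \<Rightarrow> 'v) \<Rightarrow> 'j set \<Rightarrow> ('j \<Rightarrow> 'w) \<Rightarrow> 'i \<Rightarrow> 'i \<Rightarrow> bool" where
  "idx_connected n k sV br I v J w i i' \<longleftrightarrow>
     i = i' \<or> (i \<noteq> i' \<and> (\<exists>ps. is_connection n k sV br I v J w i i' ps))"

end

theory Submission
  imports Defs
begin

text \<open>Let \<open>C\<close> be the connectivity class of a fixed index \<open>i\<^sub>0\<close>. Multiplicativity of the basis
  makes the bracket of basis vectors with first argument \<open>v\<^sub>j\<close>, \<open>j \<in> C\<close>, a multiple of some
  \<open>v\<^sub>r\<close> with \<open>r\<close> reachable from \<open>j\<close> in one step, so \<open>r \<in> C\<close>. By multilinearity the span of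
  the \<open>v\<^sub>j\<close>, \<open>j \<in> C\<close>, is therefore a \<open>k\<close>-submodule; it contains \<open>v\<^sub>i\<^sub>0 \<noteq> 0\<close>, so by
  simplicity it is the whole module, and linear independence of the basis forces \<open>C = I\<close>.\<close>

lemma linear_span_into_subspace:
  assumes "Vector_Spaces.linear s t f" and "module.subspace t U"
    and "f ` B \<subseteq> U" and "x \<in> module.span s B"
  shows "f x \<in> U"
proof -
  have hom: "module_hom s t f"
    using assms(1) by (simp add: module_hom_iff_linear)
  then have "module s"
    using module_hom_def by blast
  moreover have "module.subspace s (f -` U)"
    using module_hom.subspace_vimage[OF hom assms(2)] .
  ultimately have "module.span s B \<subseteq> f -` U"
    using assms(3) by (metis module.span_minimal image_subset_iff_subset_vimage)
  then show ?thesis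
    using assms(4) by blast
qed

lemma multilinear_span_into_subspace:
  fixes s :: "'a::field \<Rightarrow> 'b::ab_group_add \<Rightarrow> 'b" and F :: "'b list \<Rightarrow> 'c::ab_group_add"
  assumes "\<And>xs l. length xs = length Bs \<Longrightarrow> l < length Bs
      \<Longrightarrow> Vector_Spaces.linear s t (\<lambda>z. F (xs[l := z]))"
    and "module.subspace t U"
    and "\<And>xs. list_all2 (\<in>) xs Bs \<Longrightarrow> F xs \<in> U"
    and "list_all2 (\<lambda>x S. x \<in> module.span s S) xs Bs"
  shows "F xs \<in> U"
  using assms(1,3,4)
proof (induction Bs arbitrary: F xs)
  case Nil
  then show ?case by simp
next
  case (Cons S Bs)
  obtain x xs' where xs: "xs = x # xs'" and x: "x \<in> module.span s S"
    and xs': "list_all2 (\<lambda>x S. x \<in> module.span s S) xs' Bs"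
    using Cons.prems(3) by (cases xs) auto
  have first_slot: "F (x # ys) \<in> U" if ys: "list_all2 (\<in>) ys Bs" for ys
  proof (rule linear_span_into_subspace[where f = "\<lambda>z. F (z # ys)"])
    show "Vector_Spaces.linear s t (\<lambda>z. F (z # ys))"
      using Cons.prems(1)[of "z # ys" 0] ys by (simp add: list_all2_lengthD)
    show "(\<lambda>z. F (z # ys)) ` S \<subseteq> U"
      using Cons.prems(2) ys by auto
  qed (use assms(2) x in auto)
  have "F (x # xs') \<in> U"
  proof (rule Cons.IH[where F = "\<lambda>ys. F (x # ys)"])
    fix ys :: "'b list" and l assume "length ys = length Bs" and "l < length Bs"
    then show "Vector_Spaces.linear s t (\<lambda>z. F (x # ys[l := z]))"
      using Cons.prems(1)[of "x # ys" "Suc l"] by simp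
  qed (use first_slot xs' in auto)
  then show ?case
    using xs by simp
qed

lemma phi_iter_snoc:
  "phi_iter n sV br I v w A (ps @ [(X, Y)])
     = phi n sV br I v w (phi_iter n sV br I v w A ps) X Y"
  by (induction ps arbitrary: A) auto

lemma is_connection_single:
  assumes "valid_step n k I J (X, Y)" and "r \<in> mu n sV br I v w i X Y"
  shows "is_connection n k sV br I v J w i r [(X, Y)]"
  using assms unfolding is_connection_def by (auto simp: phi_def)

lemma is_connection_snoc:
  assumes ps: "is_connection n k sV br I v J w i j ps"
    and "valid_step n k I J (X, Y)" and r: "r \<in> mu n sV br I v w j X Y"
  shows "is_connection n k sV br I v J w i r (ps @ [(X, Y)])"
proof -
  have j: "j \<in> phi_iter n sV br I v w {i} ps"
    using ps unfolding is_connection_def by blast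
  have "phi_iter n sV br I v w {i} (take m (ps @ [(X, Y)])) \<noteq> {}"
    if "1 \<le> m" and "m < length (ps @ [(X, Y)])" for m
  proof (cases "m < length ps")
    case True
    then show ?thesis
      using ps that unfolding is_connection_def by auto
  next
    case False
    then have "m = length ps"
      using that by simp
    then show ?thesis
      using j by auto
  qed
  moreover have "r \<in> phi_iter n sV br I v w {i} (ps @ [(X, Y)])"
    unfolding phi_iter_snoc phi_def using j r by blast
  ultimately show ?thesis
    using assms(1,2) unfolding is_connection_def by auto
qed

lemma idx_connected_step:
  assumes "idx_connected n k sV br I v J w i j" and "valid_step n k I J (X, Y)"
    and "r \<in> mu n sV br I v w j X Y"
  shows "idx_connected n k sV br I v J w i r"
  using assms is_connection_single is_connection_snoc unfolding idx_connected_def by metis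

lemma a_idx_subset_mu:
  assumes "\<sigma> \<in> Sym n"
  shows "a_idx sV br I v w \<sigma> (j # is) js \<subseteq> mu n sV br I v w j (map Inl is) (map Inl js)"
  using assms by (auto simp: mu_def comp_def)

definition idx_class ::
  "nat \<Rightarrow> nat \<Rightarrow> ('a::field \<Rightarrow> 'v::ab_group_add \<Rightarrow> 'v) \<Rightarrow> ((nat \<Rightarrow> nat) \<Rightarrow> 'v list \<Rightarrow> 'w list \<Rightarrow> 'v)
    \<Rightarrow> 'i set \<Rightarrow> ('i \<Rightarrow> 'v) \<Rightarrow> 'j set \<Rightarrow> ('j \<Rightarrow> 'w) \<Rightarrow> 'i \<Rightarrow> 'i set" where
  "idx_class n k sV br I v J w i = {j \<in> I. idx_connected n k sV br I v J w i j}"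

lemma idx_class_subset: "idx_class n k sV br I v J w i \<subseteq> I"
  by (auto simp: idx_class_def)

lemma self_mem_idx_class: "i \<in> I \<Longrightarrow> i \<in> idx_class n k sV br I v J w i"
  by (simp add: idx_class_def idx_connected_def)

lemma a_idx_subset_idx_class:
  assumes "\<sigma> \<in> Sym n" and "j \<in> idx_class n k sV br I v J w i"
    and "set is \<subseteq> I" and "length is = k - 1" and "set js \<subseteq> J" and "length js = n - k"
  shows "a_idx sV br I v w \<sigma> (j # is) js \<subseteq> idx_class n k sV br I v J w i"
proof
  fix r assume r: "r \<in> a_idx sV br I v w \<sigma> (j # is) js"
  have "idx_connected n k sV br I v J w i j"
    using assms(2) by (simp add: idx_class_def)
  moreover have "valid_step n k I J (map Inl is, map Inl js)"
    using assms(3-6) by (auto simp: valid_step_def)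
  moreover have "r \<in> mu n sV br I v w j (map Inl is) (map Inl js)"
    using subsetD[OF a_idx_subset_mu[OF assms(1)] r] .
  ultimately have "idx_connected n k sV br I v J w i r"
    by (rule idx_connected_step)
  moreover have "r \<in> I"
    using r by (simp add: a_idx_def)
  ultimately show "r \<in> idx_class n k sV br I v J w i"
    by (simp add: idx_class_def)
qed

lemma bracket_in_span_a_idx:
  assumes "module sV" and "is_multiplicative_basis n k sV br I v J w" and "\<sigma> \<in> Sym n"
    and "set is \<subseteq> I" and "length is = k" and "set js \<subseteq> J" and "length js = n - k"
  shows "br \<sigma> (map v is) (map w js) \<in> module.span sV (v ` a_idx sV br I v w \<sigma> is js)"
proof -
  obtain r c where "r \<in> I" and br: "br \<sigma> (map v is) (map w js) = sV c (v r)"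
    using assms(2-7) unfolding is_multiplicative_basis_def by blast
  show ?thesis
  proof (cases "br \<sigma> (map v is) (map w js) = 0")
    case True
    then show ?thesis
      using module.span_zero[OF assms(1)] by simp
  next
    case False
    then have "r \<in> a_idx sV br I v w \<sigma> is js"
      using \<open>r \<in> I\<close> br unfolding a_idx_def by auto
    then show ?thesis
      unfolding br by (meson assms(1) imageI module.span_base module.span_scale)
  qed
qed

lemma list_all2_mem_replicate_image:
  assumes "list_all2 (\<in>) xs (replicate m (f ` A))"
  obtains as where "xs = map f as" and "set as \<subseteq> A" and "length as = m"
proof -
  have "xs \<in> lists (f ` A)" and "length xs = m"
    using assms by (auto simp: list_all2_conv_all_nth in_set_conv_nth)
  moreover obtain as where "xs = map f as" and "as \<in> lists A"
    using \<open>xs \<in> lists (f ` A)\<close> unfolding lists_image by blast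
  ultimately show ?thesis
    using that by auto
qed

lemma is_kmodule_module: "is_kmodule n k sV sW br \<Longrightarrow> module sV"
  by (simp add: is_kmodule_def module_iff_vector_space)

context
  fixes n k sV sW br I v J w C
  assumes km: "is_kmodule n k sV sW br" and k: "1 \<le> k"
    and mult: "is_multiplicative_basis n k sV br I v J w"
    and span_W: "module.span sW (w ` J) = UNIV"
    and C: "C \<subseteq> I"
    and closed: "\<And>\<sigma> j is js. \<sigma> \<in> Sym n \<Longrightarrow> j \<in> C \<Longrightarrow> set is \<subseteq> I \<Longrightarrow> length is = k - 1
      \<Longrightarrow> set js \<subseteq> J \<Longrightarrow> length js = n - k \<Longrightarrow> a_idx sV br I v w \<sigma> (j # is) js \<subseteq> C"
begin

lemma bracket_basis_args_in_span_closed: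
  assumes \<sigma>: "\<sigma> \<in> Sym n" and "j \<in> C" and "set is \<subseteq> I" and "length is = k - 1"
    and "length ys = n - k"
  shows "br \<sigma> (v j # map v is) ys \<in> module.span sV (v ` C)"
proof (rule multilinear_span_into_subspace
    [where Bs = "replicate (n - k) (w ` J)" and F = "br \<sigma> (v j # map v is)"])
  show "Vector_Spaces.linear sW sV (\<lambda>z. br \<sigma> (v j # map v is) (ys'[l := z]))"
    if "length ys' = length (replicate (n - k) (w ` J))"
      and "l < length (replicate (n - k) (w ` J))" for ys' l
    using km \<sigma> that \<open>length is = k - 1\<close> k unfolding is_kmodule_def by simp
  show "br \<sigma> (v j # map v is) ys' \<in> module.span sV (v ` C)"
    if ys': "list_all2 (\<in>) ys' (replicate (n - k) (w ` J))" for ys'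
  proof -
    obtain js where js: "ys' = map w js" "set js \<subseteq> J" "length js = n - k"
      using list_all2_mem_replicate_image[OF ys'] .
    have "br \<sigma> (map v (j # is)) (map w js)
        \<in> module.span sV (v ` a_idx sV br I v w \<sigma> (j # is) js)"
      by (rule bracket_in_span_a_idx[OF is_kmodule_module[OF km] mult \<sigma>])
        (use js \<open>j \<in> C\<close> C \<open>set is \<subseteq> I\<close> \<open>length is = k - 1\<close> k in auto)
    moreover have "a_idx sV br I v w \<sigma> (j # is) js \<subseteq> C"
      using closed[OF \<sigma> \<open>j \<in> C\<close> \<open>set is \<subseteq> I\<close> \<open>length is = k - 1\<close> js(2,3)] .
    then have "module.span sV (v ` a_idx sV br I v w \<sigma> (j # is) js) \<subseteq> module.span sV (v ` C)"
      by (intro module.span_mono[OF is_kmodule_module[OF km]] image_mono)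
    ultimately show ?thesis
      using js(1) by auto
  qed
  show "list_all2 (\<lambda>y S. y \<in> module.span sW S) ys (replicate (n - k) (w ` J))"
    using span_W \<open>length ys = n - k\<close> by (simp add: list_all2_conv_all_nth)
qed (rule module.subspace_span[OF is_kmodule_module[OF km]])

lemma ksubmodule_span_closed:
  assumes span_V: "module.span sV (v ` I) = UNIV"
  shows "is_ksubmodule n k sV br (module.span sV (v ` C))"
proof -
  define U where "U = module.span sV (v ` C)"
  have U: "module.subspace sV U"
    unfolding U_def using module.subspace_span[OF is_kmodule_module[OF km]] .
  have "br \<sigma> (u # xs) ys \<in> U"
    if \<sigma>: "\<sigma> \<in> Sym n" and "u \<in> U" "length xs = k - 1" "length ys = n - k" for \<sigma> u xs ys
  proof (rule multilinear_span_into_subspace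
      [where Bs = "v ` C # replicate (k - 1) (v ` I)" and F = "\<lambda>xs. br \<sigma> xs ys"])
    show "Vector_Spaces.linear sV sV (\<lambda>z. br \<sigma> (xs'[l := z]) ys)"
      if "length xs' = length (v ` C # replicate (k - 1) (v ` I))"
        and "l < length (v ` C # replicate (k - 1) (v ` I))" for xs' l
      using km \<sigma> that \<open>length ys = n - k\<close> k unfolding is_kmodule_def by simp
    show "br \<sigma> xs' ys \<in> U"
      if xs': "list_all2 (\<in>) xs' (v ` C # replicate (k - 1) (v ` I))" for xs'
    proof -
      obtain j xs'' where "xs' = v j # xs''" "j \<in> C"
        and "list_all2 (\<in>) xs'' (replicate (k - 1) (v ` I))"
        using xs' unfolding list_all2_Cons2 by blast
      moreover obtain "is" where "xs'' = map v is" "set is \<subseteq> I" "length is = k - 1"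
        using list_all2_mem_replicate_image[OF calculation(3)] .
      ultimately show ?thesis
        unfolding U_def using bracket_basis_args_in_span_closed[OF \<sigma>] \<open>length ys = n - k\<close>
        by simp
    qed
    show "list_all2 (\<lambda>x S. x \<in> module.span sV S) (u # xs) (v ` C # replicate (k - 1) (v ` I))"
      using \<open>u \<in> U\<close> \<open>length xs = k - 1\<close> span_V unfolding list_all2_Cons
      by (simp add: U_def list_all2_conv_all_nth)
  qed (rule U)
  then show ?thesis
    unfolding is_ksubmodule_def U_def[symmetric] using U by simp
qed

end

lemma basis_vector_nonzero:
  assumes "vector_space s" and "is_basis s I v" and "i \<in> I"
  shows "v i \<noteq> 0"
proof
  assume "v i = 0"
  then have "0 \<in> v ` I"
    using assms(3) by force
  then show False
    using module.dependent_zero assms(1,2) module_iff_vector_space unfolding is_basis_def by blast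
qed

lemma basis_index_mem_of_in_span:
  assumes "vector_space s" and "is_basis s I v" and "C \<subseteq> I" and "i \<in> I"
    and "v i \<in> module.span s (v ` C)"
  shows "i \<in> C"
proof (rule ccontr)
  assume "i \<notin> C"
  then have "v ` C \<subseteq> v ` I - {v i}"
    using assms(2-4) unfolding is_basis_def by (auto dest: inj_onD)
  then have "v i \<in> module.span s (v ` I - {v i})"
    using assms(1,5) module.span_mono module_iff_vector_space by blast
  then show False
    using assms(2,4) vector_space.dependent_def[OF assms(1)] unfolding is_basis_def by blast
qed

theorem mainTheorem8:
  fixes n k :: nat
    and sV :: "'a::field \<Rightarrow> 'v::ab_group_add \<Rightarrow> 'v"
    and sW :: "'a \<Rightarrow> 'w::ab_group_add \<Rightarrow> 'w"
    and br :: "(nat \<Rightarrow> nat) \<Rightarrow> 'v list \<Rightarrow> 'w list \<Rightarrow> 'v"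
    and I :: "'i set" and v :: "'i \<Rightarrow> 'v"
    and J :: "'j set" and w :: "'j \<Rightarrow> 'w"
  assumes "2 \<le> n" and "1 \<le> k" and "k \<le> n"
    and "is_kmodule n k sV sW br"
    and "is_basis sV I v" and "is_basis sW J w"
    and "is_multiplicative_basis n k sV br I v J w"
    and "is_simple_kmodule n k sV br"
  shows "\<forall>i\<in>I. \<forall>i'\<in>I. idx_connected n k sV br I v J w i i'"
proof (intro ballI)
  fix i\<^sub>0 i assume "i\<^sub>0 \<in> I" and "i \<in> I"
  have vsV: "vector_space sV"
    using assms(4) by (simp add: is_kmodule_def)
  let ?C = "idx_class n k sV br I v J w i\<^sub>0"
  have "is_ksubmodule n k sV br (module.span sV (v ` ?C))"
    by (rule ksubmodule_span_closed[OF assms(4,2,7) _ idx_class_subset a_idx_subset_idx_class])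
      (use assms(5,6) in \<open>auto simp: is_basis_def\<close>)
  moreover have "v i\<^sub>0 \<in> module.span sV (v ` ?C)"
    using self_mem_idx_class[OF \<open>i\<^sub>0 \<in> I\<close>] vsV module.span_base module_iff_vector_space
    by blast
  moreover have "v i\<^sub>0 \<noteq> 0"
    by (rule basis_vector_nonzero[OF vsV assms(5) \<open>i\<^sub>0 \<in> I\<close>])
  ultimately have "module.span sV (v ` ?C) = UNIV"
    using assms(8) unfolding is_simple_kmodule_def by blast
  then have "i \<in> ?C"
    using basis_index_mem_of_in_span[OF vsV assms(5) idx_class_subset \<open>i \<in> I\<close>] by blast
  then show "idx_connected n k sV br I v J w i\<^sub>0 i"
    by (simp add: idx_class_def)
qed

end
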